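(* Let $K$ be a field with $\operatorname{char}(K)\neq2$ and let $(C_1,C_0,s,t,e,k,(\tau,\psi))$ be a braided categorical Leibniz $K$-algebra. Then $(\ker(s),C_0,({}^e\cdot,\cdot^e),\partial_t,(\{-,-\}_\tau,\langle-,-\rangle_\psi))$ is a braided crossed module of Leibniz $K$-algebras, where for $a,b\in C_0$, $x\in\ker(s)$: $a\,{}^e\cdot\,x=[e(a),x]$, $x\cdot^e a=[x,e(a)]$, $\partial_t=t|_{\ker(s)}$, $\{a,b\}_\tau=\frac{e([a,b])-\tau_{a,b}}{2}$ and $\langle a,b\rangle_\psi=\frac{e([a,b])-\psi_{a,b}}{2}$.
   Context: A Leibniz $K$-algebra: bilinear bracket with $[x,[y,z]]=[[x,y],z]-[[x,z],y]$. Categorical Leibniz algebra $(C_1,C_0,s,t,e,k)$: Leibniz homomorphisms $s,t\colon C_1\to C_0$, $e\colon C_0\to C_1$, $k\colon C_1\times_{C_0}C_1=\{(x,y):t(x)=s(y)\}\to C_1$ forming an internal category ($se=te=\mathrm{Id}$, $sk(x,y)=s(x)$, $tk(x,y)=t(y)$, $k(es(x),x)=x=k(x,et(x))$, $k$ associative). Braiding on it: bilinear $\tau,\psi\colon C_0\times C_0\to C_1$ with, for all $a,b,c\in C_0$, $x,y\in C_1$: $s(\tau_{a,b})=s(\psi_{a,b})=[a,b]$, $t(\tau_{a,b})=t(\psi_{a,b})=-[a,b]$; $k([x,y],\tau_{t(x),t(y)})=k(\tau_{s(x),s(y)},-[x,y])$ and likewise for $\psi$; $\tau_{a,[b,c]}=\tau_{[a,b],c}-\tau_{[a,c],b}$;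 $\psi_{a,[b,c]}=\tau_{[a,b],c}-\psi_{[a,c],b}$; $\tau_{a,[b,c]}=\tau_{[a,b],c}-\psi_{[a,c],b}$; $\psi_{a,[b,c]}=\psi_{[a,b],c}-\psi_{[a,c],b}$. Leibniz action of $N$ on $M$: bilinear $\cdot_1\colon N\times M\to M$, $\cdot_2\colon M\times N\to M$ with $n\cdot_1[m,m']=[n\cdot_1m,m']-[n\cdot_1m',m]$; $[m,n\cdot_1m']=[m\cdot_2n,m']-[m,m']\cdot_2n$; $[m,m'\cdot_2n]=[m,m']\cdot_2n-[m\cdot_2n,m']$; $m\cdot_2[n,n']=(m\cdot_2n)\cdot_2n'-(m\cdot_2n')\cdot_2n$; $n\cdot_1(m\cdot_2n')=(n\cdot_1m)\cdot_2n'-[n,n']\cdot_1m$; $n\cdot_1(n'\cdot_1m)=[n,n']\cdot_1m-(n\cdot_1m)\cdot_2n'$. Crossed module $(M,N,(\cdot_1,\cdot_2),\partial)$: such an action with Leibniz homomorphism $\partial\colon M\to N$, $\partial(n\cdot_1m)=[n,\partial m]$, $\partial(m\cdot_2n)=[\partial m,n]$, $\partial(m)\cdot_1m'=[m,m']=m\cdot_2\partial(m')$. Braiding on it: bilinear $\{-,-\},\langle-,-\rangle\colon N\times N\to M$ with $\partial\{n,n'\}=[n,n']=\partial\langle n,n'\rangle$; $\{\partial m,\partial m'\}=[m,m']=\langle\partial m,\partial m'\rangle$; $\{\partial m,n\}=m\cdot_2n=\langle\partial m,n\rangle$; $\{n,\partial m\}=n\cdot_1m=\langle n,\partial m\rangle$;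 $\{n,[n',n'']\}=\{[n,n'],n''\}-\{[n,n''],n'\}$; $\langle n,[n',n'']\rangle=\{[n,n'],n''\}-\langle[n,n''],n'\rangle$; $\{n,[n',n'']\}=\{[n,n'],n''\}-\langle[n,n''],n'\rangle$; $\langle n,[n',n'']\rangle=\langle[n,n'],n''\rangle-\langle[n,n''],n'\rangle$. *)

theory Defs
  imports Complex_Main
begin

text \<open>Leibniz algebras, actions and crossed modules are
  relativised to carrier sets (subspaces), so that ker(s) can be used.\<close>

definition bilin_on ::
  "('k::field \<Rightarrow> 'a::ab_group_add \<Rightarrow> 'a) \<Rightarrow> 'a set \<Rightarrow>
   ('k \<Rightarrow> 'b::ab_group_add \<Rightarrow> 'b) \<Rightarrow> 'b set \<Rightarrow>
   ('k \<Rightarrow> 'c::ab_group_add \<Rightarrow> 'c) \<Rightarrow> 'c set \<Rightarrow> ('a \<Rightarrow> 'b \<Rightarrow> 'c) \<Rightarrow> bool" where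
  "bilin_on scA A scB B scC C f \<longleftrightarrow>
     (\<forall>x\<in>A. \<forall>y\<in>B. f x y \<in> C) \<and>
     (\<forall>x\<in>A. \<forall>x'\<in>A. \<forall>y\<in>B. f (x + x') y = f x y + f x' y) \<and>
     (\<forall>x\<in>A. \<forall>y\<in>B. \<forall>y'\<in>B. f x (y + y') = f x y + f x y') \<and>
     (\<forall>c. \<forall>x\<in>A. \<forall>y\<in>B. f (scA c x) y = scC c (f x y)) \<and>
     (\<forall>c. \<forall>x\<in>A. \<forall>y\<in>B. f x (scB c y) = scC c (f x y))"

definition leibniz_alg ::
  "('k::field \<Rightarrow> 'a::ab_group_add \<Rightarrow> 'a) \<Rightarrow> ('a \<Rightarrow> 'a \<Rightarrow> 'a) \<Rightarrow> 'a set \<Rightarrow> bool" where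
  "leibniz_alg sc br A \<longleftrightarrow>
     vector_space sc \<and> module.subspace sc A \<and> bilin_on sc A sc A sc A br \<and>
     (\<forall>x\<in>A. \<forall>y\<in>A. \<forall>z\<in>A. br x (br y z) = br (br x y) z - br (br x z) y)"

definition leibniz_hom ::
  "('k::field \<Rightarrow> 'a::ab_group_add \<Rightarrow> 'a) \<Rightarrow> ('a \<Rightarrow> 'a \<Rightarrow> 'a) \<Rightarrow> 'a set \<Rightarrow>
   ('k \<Rightarrow> 'b::ab_group_add \<Rightarrow> 'b) \<Rightarrow> ('b \<Rightarrow> 'b \<Rightarrow> 'b) \<Rightarrow> 'b set \<Rightarrow> ('a \<Rightarrow> 'b) \<Rightarrow> bool" where
  "leibniz_hom scA brA A scB brB B f \<longleftrightarrow>
     (\<forall>x\<in>A. f x \<in> B) \<and>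
     (\<forall>x\<in>A. \<forall>y\<in>A. f (x + y) = f x + f y) \<and>
     (\<forall>c. \<forall>x\<in>A. f (scA c x) = scB c (f x)) \<and>
     (\<forall>x\<in>A. \<forall>y\<in>A. f (brA x y) = brB (f x) (f y))"

text \<open>Categorical Leibniz algebra (C1, C0, s, t, e, k): C1 and C0 are the whole
  types; the composition k (curried) is a Leibniz homomorphism on the pullback
  C1 \<times>_C0 C1 = {(x,y). t x = s y} (a Leibniz algebra with componentwise
  operations), and the internal category axioms hold.\<close>
definition categorical_leibniz ::
  "('k::field \<Rightarrow> 'c::ab_group_add \<Rightarrow> 'c) \<Rightarrow> ('c \<Rightarrow> 'c \<Rightarrow> 'c) \<Rightarrow>
   ('k \<Rightarrow> 'd::ab_group_add \<Rightarrow> 'd) \<Rightarrow> ('d \<Rightarrow> 'd \<Rightarrow> 'd) \<Rightarrow>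
   ('c \<Rightarrow> 'd) \<Rightarrow> ('c \<Rightarrow> 'd) \<Rightarrow> ('d \<Rightarrow> 'c) \<Rightarrow> ('c \<Rightarrow> 'c \<Rightarrow> 'c) \<Rightarrow> bool" where
  "categorical_leibniz sc1 br1 sc0 br0 s t e k \<longleftrightarrow>
     leibniz_alg sc1 br1 UNIV \<and> leibniz_alg sc0 br0 UNIV \<and>
     leibniz_hom sc1 br1 UNIV sc0 br0 UNIV s \<and>
     leibniz_hom sc1 br1 UNIV sc0 br0 UNIV t \<and>
     leibniz_hom sc0 br0 UNIV sc1 br1 UNIV e \<and>
     (\<forall>x y x' y'. t x = s y \<longrightarrow> t x' = s y' \<longrightarrow>
        k (x + x') (y + y') = k x y + k x' y' \<and>
        k (br1 x x') (br1 y y') = br1 (k x y) (k x' y')) \<and>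
     (\<forall>c x y. t x = s y \<longrightarrow> k (sc1 c x) (sc1 c y) = sc1 c (k x y)) \<and>
     (\<forall>a. s (e a) = a \<and> t (e a) = a) \<and>
     (\<forall>x y. t x = s y \<longrightarrow> s (k x y) = s x \<and> t (k x y) = t y) \<and>
     (\<forall>x. k (e (s x)) x = x \<and> k x (e (t x)) = x) \<and>
     (\<forall>x y z. t x = s y \<longrightarrow> t y = s z \<longrightarrow> k (k x y) z = k x (k y z))"

definition cat_braiding ::
  "('k::field \<Rightarrow> 'c::ab_group_add \<Rightarrow> 'c) \<Rightarrow> ('c \<Rightarrow> 'c \<Rightarrow> 'c) \<Rightarrow>
   ('k \<Rightarrow> 'd::ab_group_add \<Rightarrow> 'd) \<Rightarrow> ('d \<Rightarrow> 'd \<Rightarrow> 'd) \<Rightarrow>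
   ('c \<Rightarrow> 'd) \<Rightarrow> ('c \<Rightarrow> 'd) \<Rightarrow> ('c \<Rightarrow> 'c \<Rightarrow> 'c) \<Rightarrow>
   ('d \<Rightarrow> 'd \<Rightarrow> 'c) \<Rightarrow> ('d \<Rightarrow> 'd \<Rightarrow> 'c) \<Rightarrow> bool" where
  "cat_braiding sc1 br1 sc0 br0 s t k \<tau> \<psi> \<longleftrightarrow>
     bilin_on sc0 UNIV sc0 UNIV sc1 UNIV \<tau> \<and> bilin_on sc0 UNIV sc0 UNIV sc1 UNIV \<psi> \<and>
     (\<forall>a b. s (\<tau> a b) = br0 a b \<and> s (\<psi> a b) = br0 a b \<and>
            t (\<tau> a b) = - br0 a b \<and> t (\<psi> a b) = - br0 a b) \<and>
     (\<forall>x y. k (br1 x y) (\<tau> (t x) (t y)) = k (\<tau> (s x) (s y)) (- br1 x y) \<and>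
            k (br1 x y) (\<psi> (t x) (t y)) = k (\<psi> (s x) (s y)) (- br1 x y)) \<and>
     (\<forall>a b c. \<tau> a (br0 b c) = \<tau> (br0 a b) c - \<tau> (br0 a c) b \<and>
              \<psi> a (br0 b c) = \<tau> (br0 a b) c - \<psi> (br0 a c) b \<and>
              \<tau> a (br0 b c) = \<tau> (br0 a b) c - \<psi> (br0 a c) b \<and>
              \<psi> a (br0 b c) = \<psi> (br0 a b) c - \<psi> (br0 a c) b)"

definition leibniz_action ::
  "('k::field \<Rightarrow> 'm::ab_group_add \<Rightarrow> 'm) \<Rightarrow> ('m \<Rightarrow> 'm \<Rightarrow> 'm) \<Rightarrow> 'm set \<Rightarrow>
   ('k \<Rightarrow> 'n::ab_group_add \<Rightarrow> 'n) \<Rightarrow> ('n \<Rightarrow> 'n \<Rightarrow> 'n) \<Rightarrow> 'n set \<Rightarrow>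
   ('n \<Rightarrow> 'm \<Rightarrow> 'm) \<Rightarrow> ('m \<Rightarrow> 'n \<Rightarrow> 'm) \<Rightarrow> bool" where
  "leibniz_action scM brM M scN brN N act1 act2 \<longleftrightarrow>
     bilin_on scN N scM M scM M act1 \<and> bilin_on scM M scN N scM M act2 \<and>
     (\<forall>n\<in>N. \<forall>m\<in>M. \<forall>m'\<in>M. act1 n (brM m m') = brM (act1 n m) m' - brM (act1 n m') m) \<and>
     (\<forall>n\<in>N. \<forall>m\<in>M. \<forall>m'\<in>M. brM m (act1 n m') = brM (act2 m n) m' - act2 (brM m m') n) \<and>
     (\<forall>n\<in>N. \<forall>m\<in>M. \<forall>m'\<in>M. brM m (act2 m' n) = act2 (brM m m') n - brM (act2 m n) m') \<and>
     (\<forall>m\<in>M. \<forall>n\<in>N. \<forall>n'\<in>N. act2 m (brN n n') = act2 (act2 m n) n' - act2 (act2 m n') n) \<and>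
     (\<forall>m\<in>M. \<forall>n\<in>N. \<forall>n'\<in>N. act1 n (act2 m n') = act2 (act1 n m) n' - act1 (brN n n') m) \<and>
     (\<forall>m\<in>M. \<forall>n\<in>N. \<forall>n'\<in>N. act1 n (act1 n' m) = act1 (brN n n') m - act2 (act1 n m) n')"

definition crossed_module ::
  "('k::field \<Rightarrow> 'm::ab_group_add \<Rightarrow> 'm) \<Rightarrow> ('m \<Rightarrow> 'm \<Rightarrow> 'm) \<Rightarrow> 'm set \<Rightarrow>
   ('k \<Rightarrow> 'n::ab_group_add \<Rightarrow> 'n) \<Rightarrow> ('n \<Rightarrow> 'n \<Rightarrow> 'n) \<Rightarrow> 'n set \<Rightarrow>
   ('n \<Rightarrow> 'm \<Rightarrow> 'm) \<Rightarrow> ('m \<Rightarrow> 'n \<Rightarrow> 'm) \<Rightarrow> ('m \<Rightarrow> 'n) \<Rightarrow> bool" where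
  "crossed_module scM brM M scN brN N act1 act2 d \<longleftrightarrow>
     leibniz_alg scM brM M \<and> leibniz_alg scN brN N \<and>
     leibniz_action scM brM M scN brN N act1 act2 \<and>
     leibniz_hom scM brM M scN brN N d \<and>
     (\<forall>n\<in>N. \<forall>m\<in>M. d (act1 n m) = brN n (d m) \<and> d (act2 m n) = brN (d m) n) \<and>
     (\<forall>m\<in>M. \<forall>m'\<in>M. act1 (d m) m' = brM m m' \<and> brM m m' = act2 m (d m'))"

definition braided_crossed_module ::
  "('k::field \<Rightarrow> 'm::ab_group_add \<Rightarrow> 'm) \<Rightarrow> ('m \<Rightarrow> 'm \<Rightarrow> 'm) \<Rightarrow> 'm set \<Rightarrow>
   ('k \<Rightarrow> 'n::ab_group_add \<Rightarrow> 'n) \<Rightarrow> ('n \<Rightarrow> 'n \<Rightarrow> 'n) \<Rightarrow> 'n set \<Rightarrow>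
   ('n \<Rightarrow> 'm \<Rightarrow> 'm) \<Rightarrow> ('m \<Rightarrow> 'n \<Rightarrow> 'm) \<Rightarrow> ('m \<Rightarrow> 'n) \<Rightarrow>
   ('n \<Rightarrow> 'n \<Rightarrow> 'm) \<Rightarrow> ('n \<Rightarrow> 'n \<Rightarrow> 'm) \<Rightarrow> bool" where
  "braided_crossed_module scM brM M scN brN N act1 act2 d br ang \<longleftrightarrow>
     crossed_module scM brM M scN brN N act1 act2 d \<and>
     bilin_on scN N scN N scM M br \<and> bilin_on scN N scN N scM M ang \<and>
     (\<forall>n\<in>N. \<forall>n'\<in>N. d (br n n') = brN n n' \<and> brN n n' = d (ang n n')) \<and>
     (\<forall>m\<in>M. \<forall>m'\<in>M. br (d m) (d m') = brM m m' \<and> brM m m' = ang (d m) (d m')) \<and>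
     (\<forall>m\<in>M. \<forall>n\<in>N. br (d m) n = act2 m n \<and> act2 m n = ang (d m) n) \<and>
     (\<forall>m\<in>M. \<forall>n\<in>N. br n (d m) = act1 n m \<and> act1 n m = ang n (d m)) \<and>
     (\<forall>n\<in>N. \<forall>n'\<in>N. \<forall>n''\<in>N.
        br n (brN n' n'') = br (brN n n') n'' - br (brN n n'') n' \<and>
        ang n (brN n' n'') = br (brN n n') n'' - ang (brN n n'') n' \<and>
        br n (brN n' n'') = br (brN n n') n'' - ang (brN n n'') n' \<and>
        ang n (brN n' n'') = ang (brN n n') n'' - ang (brN n n'') n')"

end

theory Submission
  imports Defs
begin

text \<open>In an internal category in vector spaces the composition is forced to be
  \<open>k x y = x + y - e (t x)\<close>. As \<open>k\<close> also preserves brackets, \<open>[ker t, ker s] = [ker s, ker t] = 0\<close>,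
  which is exactly what the Peiffer identities of \<open>t : ker s \<rightarrow> C\<^sub>0\<close> require.
  For a braiding component \<open>\<phi>\<close>, evaluating its naturality square at \<open>(x, y)\<close> with \<open>x\<close> or \<open>y\<close>
  in \<open>ker s\<close> gives \<open>e [t x, t y] - \<phi> (t x) (t y) = 2 [x, y]\<close>; dividing by 2 turns \<open>\<phi>\<close> into a
  braiding of the crossed module, and the identities relating \<open>\<tau>\<close> and \<open>\<psi>\<close> carry over
  because \<open>e \<circ> [-, -]\<close> satisfies the Leibniz identity.\<close>

lemma two_neq_zero_if_CHAR_neq_2:
  assumes "CHAR('a::{semiring_1, zero_neq_one}) \<noteq> 2"
  shows "(2::'a) \<noteq> 0"
proof
  assume "(2::'a) = 0"
  then have "CHAR('a) dvd 2"
    using of_nat_eq_0_iff_char_dvd[where 'a='a, of 2] by simp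
  then have "CHAR('a) \<in> {1, 2}"
    using dvd_imp_le[of "CHAR('a)" 2] by (cases "CHAR('a)") (auto simp: less_Suc_eq_le le_Suc_eq)
  with assms CHAR_not_1 show False by auto
qed

lemma (in vector_space) scale_inverse_2_double:
  assumes "(2::'a) \<noteq> 0"
  shows "scale (inverse 2) (x + x) = x"
proof -
  have "x + x = scale 2 x"
    using scale_left_distrib[of 1 1 x] by (simp add: one_add_one)
  then show ?thesis
    using assms by simp
qed

lemma bilin_on_UNIV_arith:
  assumes "bilin_on scA UNIV scB UNIV scC UNIV f"
  shows "f (x + x') y = f x y + f x' y" "f x (y + y') = f x y + f x y'"
    and "f (scA c x) y = scC c (f x y)" "f x (scB c y) = scC c (f x y)"
    and "f 0 y = 0" "f x 0 = 0"
    and "f (- x) y = - f x y" "f x (- y) = - f x y"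
    and "f (x - x') y = f x y - f x' y" "f x (y - y') = f x y - f x y'"
proof -
  have add1: "\<And>x x' y. f (x + x') y = f x y + f x' y"
    and add2: "\<And>x y y'. f x (y + y') = f x y + f x y'"
    using assms unfolding bilin_on_def by auto
  interpret left: additive "\<lambda>x. f x y" by standard (rule add1)
  interpret right: additive "f x" by standard (rule add2)
  show "f (x + x') y = f x y + f x' y" "f x (y + y') = f x y + f x y'"
    by (rule add1 add2)+
  show "f (scA c x) y = scC c (f x y)" "f x (scB c y) = scC c (f x y)"
    using assms unfolding bilin_on_def by auto
  show "f 0 y = 0" "f x 0 = 0" "f (- x) y = - f x y" "f x (- y) = - f x y"
    "f (x - x') y = f x y - f x' y" "f x (y - y') = f x y - f x y'"
    using left.zero right.zero left.minus right.minus left.diff right.diff by simp_all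
qed

lemma leibniz_hom_UNIV_arith:
  assumes "leibniz_hom scA brA UNIV scB brB UNIV f"
  shows "f (x + y) = f x + f y" "f (scA c x) = scB c (f x)" "f (brA x y) = brB (f x) (f y)"
    and "f 0 = 0" "f (- x) = - f x" "f (x - y) = f x - f y"
proof -
  have add: "\<And>x y. f (x + y) = f x + f y"
    using assms unfolding leibniz_hom_def by auto
  interpret additive f by standard (rule add)
  show "f (x + y) = f x + f y" by (rule add)
  show "f (scA c x) = scB c (f x)" "f (brA x y) = brB (f x) (f y)"
    using assms unfolding leibniz_hom_def by auto
  show "f 0 = 0" "f (- x) = - f x" "f (x - y) = f x - f y"
    by (rule zero minus diff)+
qed

lemma internal_category_comp_eq:
  fixes s t :: "'c::ab_group_add \<Rightarrow> 'd::ab_group_add"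
  assumes "additive s" "additive e"
    and comp_add: "\<And>x y x' y'. t x = s y \<Longrightarrow> t x' = s y' \<Longrightarrow> k (x + x') (y + y') = k x y + k x' y'"
    and s_e: "\<And>a. s (e a) = a" and t_e: "\<And>a. t (e a) = a"
    and comp_left_unit: "\<And>x. k (e (s x)) x = x" and comp_right_unit: "\<And>x. k x (e (t x)) = x"
    and "t x = s y"
  shows "k x y = x + y - e (t x)"
proof -
  interpret s: additive s by fact
  interpret e: additive e by fact
  have left_zero: "k 0 v = v" if "s v = 0" for v
    using comp_left_unit[of v] that by (simp add: e.zero)
  have t_zero: "t 0 = 0"
    using t_e[of 0] by (simp add: e.zero)
  have s_rest: "s (y - e (t x)) = 0"
    using \<open>t x = s y\<close> by (simp add: s.diff s_e)
  have "k x y = k (x + 0) (e (t x) + (y - e (t x)))"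
    by simp
  also have "\<dots> = k x (e (t x)) + k 0 (y - e (t x))"
    using s_rest by (intro comp_add) (simp_all add: s_e t_zero)
  also have "\<dots> = x + (y - e (t x))"
    using s_rest by (simp add: comp_right_unit left_zero)
  finally show ?thesis
    by simp
qed

locale categorical_leibniz_alg =
  fixes sc1 :: "'k::field \<Rightarrow> 'c::ab_group_add \<Rightarrow> 'c" and br1 :: "'c \<Rightarrow> 'c \<Rightarrow> 'c"
    and sc0 :: "'k \<Rightarrow> 'd::ab_group_add \<Rightarrow> 'd" and br0 :: "'d \<Rightarrow> 'd \<Rightarrow> 'd"
    and s t :: "'c \<Rightarrow> 'd" and e :: "'d \<Rightarrow> 'c" and k :: "'c \<Rightarrow> 'c \<Rightarrow> 'c"
  assumes categorical: "categorical_leibniz sc1 br1 sc0 br0 s t e k"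
begin

lemma leibniz_alg_C1: "leibniz_alg sc1 br1 UNIV"
  and leibniz_alg_C0: "leibniz_alg sc0 br0 UNIV"
  and s_hom: "leibniz_hom sc1 br1 UNIV sc0 br0 UNIV s"
  and t_hom: "leibniz_hom sc1 br1 UNIV sc0 br0 UNIV t"
  and e_hom: "leibniz_hom sc0 br0 UNIV sc1 br1 UNIV e"
  and comp_add: "t x = s y \<Longrightarrow> t x' = s y' \<Longrightarrow> k (x + x') (y + y') = k x y + k x' y'"
  and comp_bracket: "t x = s y \<Longrightarrow> t x' = s y' \<Longrightarrow> k (br1 x x') (br1 y y') = br1 (k x y) (k x' y')"
  and s_e [simp]: "s (e a) = a" and t_e [simp]: "t (e a) = a"
  and comp_left_unit: "k (e (s x)) x = x" and comp_right_unit: "k x (e (t x)) = x"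
  using categorical unfolding categorical_leibniz_def by blast+

sublocale C1: vector_space sc1
  using leibniz_alg_C1 unfolding leibniz_alg_def by blast

sublocale C0: vector_space sc0
  using leibniz_alg_C0 unfolding leibniz_alg_def by blast

lemma br1_bilin: "bilin_on sc1 UNIV sc1 UNIV sc1 UNIV br1"
  and br0_bilin: "bilin_on sc0 UNIV sc0 UNIV sc0 UNIV br0"
  and leibniz1: "br1 x (br1 y z) = br1 (br1 x y) z - br1 (br1 x z) y"
  and leibniz0: "br0 a (br0 b c) = br0 (br0 a b) c - br0 (br0 a c) b"
  using leibniz_alg_C1 leibniz_alg_C0 unfolding leibniz_alg_def by blast+

lemmas br1_arith [simp] = bilin_on_UNIV_arith[OF br1_bilin]
lemmas br0_arith [simp] = bilin_on_UNIV_arith[OF br0_bilin]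
lemmas s_arith [simp] = leibniz_hom_UNIV_arith[OF s_hom]
lemmas t_arith [simp] = leibniz_hom_UNIV_arith[OF t_hom]
lemmas e_arith [simp] = leibniz_hom_UNIV_arith[OF e_hom]

lemma comp_eq: "t x = s y \<Longrightarrow> k x y = x + y - e (t x)"
  by (rule internal_category_comp_eq[of s e t k])
    (unfold_locales, simp_all add: comp_add comp_left_unit comp_right_unit)

text \<open>Since \<open>k\<close> preserves brackets, \<open>[u, v] = [k u 0, k 0 v] = k [u, 0] [0, v] = 0\<close>.\<close>
lemma bracket_ker_t_ker_s: "t u = 0 \<Longrightarrow> s v = 0 \<Longrightarrow> br1 u v = 0"
  using comp_bracket[of u 0 0 v] comp_eq[of u 0] comp_eq[of 0 v] comp_eq[of 0 0] by simp

lemma bracket_ker_s_ker_t: "t u = 0 \<Longrightarrow> s v = 0 \<Longrightarrow> br1 v u = 0"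
  using comp_bracket[of 0 v u 0] comp_eq[of u 0] comp_eq[of 0 v] comp_eq[of 0 0] by simp

lemma bracket_e_t_left: "s y = 0 \<Longrightarrow> br1 (e (t x)) y = br1 x y"
  using bracket_ker_t_ker_s[of "x - e (t x)" y] by simp

lemma bracket_e_t_right: "s x = 0 \<Longrightarrow> br1 x (e (t y)) = br1 x y"
  using bracket_ker_s_ker_t[of "y - e (t y)" x] by simp

lemma leibniz_alg_ker_s: "leibniz_alg sc1 br1 {x. s x = 0}"
  unfolding leibniz_alg_def bilin_on_def C1.subspace_def
  by (simp add: C1.vector_space_axioms leibniz1)

lemma leibniz_action_ker_s:
  "leibniz_action sc1 br1 {x. s x = 0} sc0 br0 UNIV (\<lambda>a x. br1 (e a) x) (\<lambda>x a. br1 x (e a))"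
  unfolding leibniz_action_def bilin_on_def by (simp add: leibniz1)

lemma leibniz_hom_t_ker_s: "leibniz_hom sc1 br1 {x. s x = 0} sc0 br0 UNIV t"
  unfolding leibniz_hom_def by simp

lemma crossed_module_ker_s:
  "crossed_module sc1 br1 {x. s x = 0} sc0 br0 UNIV (\<lambda>a x. br1 (e a) x) (\<lambda>x a. br1 x (e a)) t"
  unfolding crossed_module_def
  using leibniz_alg_ker_s leibniz_alg_C0 leibniz_action_ker_s leibniz_hom_t_ker_s
  by (simp add: bracket_e_t_left bracket_e_t_right)

definition braiding_bracket :: "('d \<Rightarrow> 'd \<Rightarrow> 'c) \<Rightarrow> 'd \<Rightarrow> 'd \<Rightarrow> 'c" where
  "braiding_bracket \<phi> a b = sc1 (inverse 2) (e (br0 a b) - \<phi> a b)"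

lemma braiding_bracket_leibniz_rule:
  assumes "\<phi> a (br0 b c) = \<phi>' (br0 a b) c - \<phi>'' (br0 a c) b"
  shows "braiding_bracket \<phi> a (br0 b c) =
    braiding_bracket \<phi>' (br0 a b) c - braiding_bracket \<phi>'' (br0 a c) b"
proof -
  have "e (br0 a (br0 b c)) - \<phi> a (br0 b c) =
      (e (br0 (br0 a b) c) - \<phi>' (br0 a b) c) - (e (br0 (br0 a c) b) - \<phi>'' (br0 a c) b)"
    using assms by (simp add: leibniz0 algebra_simps)
  then show ?thesis
    unfolding braiding_bracket_def by (simp only: C1.scale_right_diff_distrib)
qed

end

locale braiding_component = categorical_leibniz_alg sc1 br1 sc0 br0 s t e k
  for sc1 :: "'k::field \<Rightarrow> 'c::ab_group_add \<Rightarrow> 'c" and br1 sc0 br0 s t e k +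
  fixes \<phi>
  assumes \<phi>_bilin: "bilin_on sc0 UNIV sc0 UNIV sc1 UNIV \<phi>"
    and s_\<phi>: "s (\<phi> a b) = br0 a b" and t_\<phi>: "t (\<phi> a b) = - br0 a b"
    and \<phi>_natural: "k (br1 x y) (\<phi> (t x) (t y)) = k (\<phi> (s x) (s y)) (- br1 x y)"
    and two_neq_zero: "(2::'k) \<noteq> 0"
begin

lemmas \<phi>_arith [simp] = bilin_on_UNIV_arith[OF \<phi>_bilin]

lemma bilin_on_braiding_bracket: "bilin_on sc0 UNIV sc0 UNIV sc1 {x. s x = 0} (braiding_bracket \<phi>)"
  unfolding bilin_on_def braiding_bracket_def
  by (simp add: s_\<phi> algebra_simps)

lemma t_braiding_bracket: "t (braiding_bracket \<phi> a b) = br0 a b"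
  unfolding braiding_bracket_def using C0.scale_inverse_2_double[OF two_neq_zero]
  by (simp add: t_\<phi>)

text \<open>Both sides of the naturality square are evaluated by \<open>comp_eq\<close>; the right-hand side
  collapses because \<open>\<phi> (s x) (s y) = 0\<close>.\<close>
lemma e_bracket_minus_braiding_eq_double:
  assumes "s x = 0 \<or> s y = 0"
  shows "e (br0 (t x) (t y)) - \<phi> (t x) (t y) = br1 x y + br1 x y"
proof -
  have "br1 x y + \<phi> (t x) (t y) - e (br0 (t x) (t y)) = k (br1 x y) (\<phi> (t x) (t y))"
    by (simp add: comp_eq s_\<phi>)
  also have "\<dots> = k (\<phi> (s x) (s y)) (- br1 x y)"
    by (rule \<phi>_natural)
  also have "\<dots> = - br1 x y"
    using assms by (auto simp: comp_eq)
  finally show ?thesis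
    by (simp add: algebra_simps eq_neg_iff_add_eq_0)
qed

lemma braiding_bracket_t_t:
  assumes "s x = 0 \<or> s y = 0"
  shows "braiding_bracket \<phi> (t x) (t y) = br1 x y"
  unfolding braiding_bracket_def e_bracket_minus_braiding_eq_double[OF assms]
  by (rule C1.scale_inverse_2_double[OF two_neq_zero])

lemma braiding_bracket_t_left: "s x = 0 \<Longrightarrow> braiding_bracket \<phi> (t x) b = br1 x (e b)"
  using braiding_bracket_t_t[of x "e b"] by simp

lemma braiding_bracket_t_right: "s y = 0 \<Longrightarrow> braiding_bracket \<phi> a (t y) = br1 (e a) y"
  using braiding_bracket_t_t[of "e a" y] by simp

end

locale braided_categorical_leibniz = categorical_leibniz_alg sc1 br1 sc0 br0 s t e k
  for sc1 :: "'k::field \<Rightarrow> 'c::ab_group_add \<Rightarrow> 'c" and br1 sc0 br0 s t e k +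
  fixes \<tau> \<psi>
  assumes braiding: "cat_braiding sc1 br1 sc0 br0 s t k \<tau> \<psi>"
    and two_neq_zero: "(2::'k) \<noteq> 0"
begin

sublocale tau: braiding_component sc1 br1 sc0 br0 s t e k \<tau>
  using braiding two_neq_zero unfolding cat_braiding_def by unfold_locales blast+

sublocale psi: braiding_component sc1 br1 sc0 br0 s t e k \<psi>
  using braiding two_neq_zero unfolding cat_braiding_def by unfold_locales blast+

lemma braiding_bracket_identities:
  "braiding_bracket \<tau> a (br0 b c) = braiding_bracket \<tau> (br0 a b) c - braiding_bracket \<tau> (br0 a c) b"
  "braiding_bracket \<psi> a (br0 b c) = braiding_bracket \<tau> (br0 a b) c - braiding_bracket \<psi> (br0 a c) b"
  "braiding_bracket \<tau> a (br0 b c) = braiding_bracket \<tau> (br0 a b) c - braiding_bracket \<psi> (br0 a c) b"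
  "braiding_bracket \<psi> a (br0 b c) = braiding_bracket \<psi> (br0 a b) c - braiding_bracket \<psi> (br0 a c) b"
  using braiding unfolding cat_braiding_def by (blast intro: braiding_bracket_leibniz_rule)+

theorem braided_crossed_module_ker_s:
  "braided_crossed_module sc1 br1 {x. s x = 0} sc0 br0 UNIV
     (\<lambda>a x. br1 (e a) x) (\<lambda>x a. br1 x (e a)) t (braiding_bracket \<tau>) (braiding_bracket \<psi>)"
  unfolding braided_crossed_module_def
  using crossed_module_ker_s tau.bilin_on_braiding_bracket psi.bilin_on_braiding_bracket
  by (simp add: tau.t_braiding_bracket psi.t_braiding_bracket tau.braiding_bracket_t_left
      psi.braiding_bracket_t_left tau.braiding_bracket_t_right psi.braiding_bracket_t_right
      bracket_e_t_left bracket_e_t_right)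
    (use braiding_bracket_identities in blast)

end

theorem mainTheorem4:
  fixes sc1 :: "'k::field \<Rightarrow> 'c::ab_group_add \<Rightarrow> 'c" and br1 :: "'c \<Rightarrow> 'c \<Rightarrow> 'c"
    and sc0 :: "'k \<Rightarrow> 'd::ab_group_add \<Rightarrow> 'd" and br0 :: "'d \<Rightarrow> 'd \<Rightarrow> 'd"
    and s t :: "'c \<Rightarrow> 'd" and e :: "'d \<Rightarrow> 'c" and k :: "'c \<Rightarrow> 'c \<Rightarrow> 'c"
    and \<tau> \<psi> :: "'d \<Rightarrow> 'd \<Rightarrow> 'c"
  assumes "CHAR('k) \<noteq> 2"
    and "categorical_leibniz sc1 br1 sc0 br0 s t e k"
    and "cat_braiding sc1 br1 sc0 br0 s t k \<tau> \<psi>"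
  shows "braided_crossed_module sc1 br1 {x. s x = 0} sc0 br0 UNIV
           (\<lambda>a x. br1 (e a) x) (\<lambda>x a. br1 x (e a)) t
           (\<lambda>a b. sc1 (inverse 2) (e (br0 a b) - \<tau> a b))
           (\<lambda>a b. sc1 (inverse 2) (e (br0 a b) - \<psi> a b))"
proof -
  interpret braided_categorical_leibniz sc1 br1 sc0 br0 s t e k \<tau> \<psi>
    using assms two_neq_zero_if_CHAR_neq_2 by unfold_locales blast+
  show ?thesis
    using braided_crossed_module_ker_s unfolding braiding_bracket_def[abs_def] .
qed

end
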